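(* If $G$ is a tightly closed graph on $[n]$, then $NC_G$ is graded.
   Context: Graphs are finite simple graphs with vertex set $[n]$; edges are written $ij$ with $i<j$. Two edges $a_1a_2$ and $b_1b_2$ cross if $a_1<b_1<a_2<b_2$ or $b_1<a_1<b_2<a_2$. A bond of $G$ is a spanning subgraph (identified with its edge set) each of whose connected components is an induced subgraph of $G$; it is noncrossing if there are no two distinct components with vertex sets $B,B'$ and $a,c\in B$, $b,d\in B'$, $a<b<c<d$. $NC_G$ is the poset of noncrossing bonds ordered by inclusion of edge sets. Two crossing edges $e,f$ are crossing closed if among all induced connected subgraphs of $G$ containing $e$ and $f$ there is a unique minimal one under containment, denoted $J(e,f)$; $G$ is crossing closed if all pairs of crossing edges are. $G$ is tightly closed if it is crossing closed and for all crossing edges $e,f$, $J(e,f)$ is a subgraph of $K_4$. *)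

theory Defs
  imports Main
begin

definition simple_graph :: "nat \<Rightarrow> (nat \<times> nat) set \<Rightarrow> bool" where
  "simple_graph n E \<longleftrightarrow> E \<subseteq> {(i,j). 1 \<le> i \<and> i < j \<and> j \<le> n}"

definition adj :: "(nat \<times> nat) set \<Rightarrow> nat \<Rightarrow> nat \<Rightarrow> bool" where
  "adj F u v \<longleftrightarrow> (u,v) \<in> F \<or> (v,u) \<in> F"

definition same_comp :: "(nat \<times> nat) set \<Rightarrow> nat \<Rightarrow> nat \<Rightarrow> bool" where
  "same_comp F = (adj F)\<^sup>*\<^sup>*"

(* bond: spanning subgraph each of whose components is an induced subgraph of G *)
definition is_bond :: "nat \<Rightarrow> (nat \<times> nat) set \<Rightarrow> (nat \<times> nat) set \<Rightarrow> bool" where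
  "is_bond n E F \<longleftrightarrow> F \<subseteq> E \<and> (\<forall>i j. (i,j) \<in> E \<and> same_comp F i j \<longrightarrow> (i,j) \<in> F)"

definition noncrossing_bond :: "nat \<Rightarrow> (nat \<times> nat) set \<Rightarrow> (nat \<times> nat) set \<Rightarrow> bool" where
  "noncrossing_bond n E F \<longleftrightarrow> is_bond n E F \<and>
     \<not> (\<exists>a b c d. a \<in> {1..n} \<and> b \<in> {1..n} \<and> c \<in> {1..n} \<and> d \<in> {1..n} \<and>
          a < b \<and> b < c \<and> c < d \<and> same_comp F a c \<and> same_comp F b d \<and> \<not> same_comp F a b)"

(* NC_G as a set of edge sets, ordered by inclusion *)
definition NC :: "nat \<Rightarrow> (nat \<times> nat) set \<Rightarrow> (nat \<times> nat) set set" where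
  "NC n E = {F. noncrossing_bond n E F}"

definition crosses :: "nat \<times> nat \<Rightarrow> nat \<times> nat \<Rightarrow> bool" where
  "crosses e f \<longleftrightarrow> (case e of (a1,a2) \<Rightarrow> case f of (b1,b2) \<Rightarrow>
      (a1 < b1 \<and> b1 < a2 \<and> a2 < b2) \<or> (b1 < a1 \<and> a1 < b2 \<and> b2 < a2))"

definition induced_connected :: "nat \<Rightarrow> (nat \<times> nat) set \<Rightarrow> nat set \<Rightarrow> bool" where
  "induced_connected n E S \<longleftrightarrow> S \<subseteq> {1..n} \<and> S \<noteq> {} \<and>
     (\<forall>u\<in>S. \<forall>v\<in>S. (\<lambda>x y. x \<in> S \<and> y \<in> S \<and> adj E x y)\<^sup>*\<^sup>* u v)"

definition conn_cands :: "nat \<Rightarrow> (nat \<times> nat) set \<Rightarrow> nat \<times> nat \<Rightarrow> nat \<times> nat \<Rightarrow> nat set set" where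
  "conn_cands n E e f = {S. induced_connected n E S \<and> fst e \<in> S \<and> snd e \<in> S \<and> fst f \<in> S \<and> snd f \<in> S}"

definition minimal_cand :: "nat \<Rightarrow> (nat \<times> nat) set \<Rightarrow> nat \<times> nat \<Rightarrow> nat \<times> nat \<Rightarrow> nat set \<Rightarrow> bool" where
  "minimal_cand n E e f S \<longleftrightarrow> S \<in> conn_cands n E e f \<and> (\<forall>T\<in>conn_cands n E e f. T \<subseteq> S \<longrightarrow> T = S)"

definition crossing_closed_pair :: "nat \<Rightarrow> (nat \<times> nat) set \<Rightarrow> nat \<times> nat \<Rightarrow> nat \<times> nat \<Rightarrow> bool" where
  "crossing_closed_pair n E e f \<longleftrightarrow> (\<exists>!S. minimal_cand n E e f S)"

(* vertex set of J(e,f); J(e,f) is the induced subgraph of G on it *)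
definition J :: "nat \<Rightarrow> (nat \<times> nat) set \<Rightarrow> nat \<times> nat \<Rightarrow> nat \<times> nat \<Rightarrow> nat set" where
  "J n E e f = (THE S. minimal_cand n E e f S)"

definition crossing_closed :: "nat \<Rightarrow> (nat \<times> nat) set \<Rightarrow> bool" where
  "crossing_closed n E \<longleftrightarrow> (\<forall>e\<in>E. \<forall>f\<in>E. crosses e f \<longrightarrow> crossing_closed_pair n E e f)"

(* a simple graph is a subgraph of K4 iff it has at most 4 vertices *)
definition tightly_closed :: "nat \<Rightarrow> (nat \<times> nat) set \<Rightarrow> bool" where
  "tightly_closed n E \<longleftrightarrow> crossing_closed n E \<and>
     (\<forall>e\<in>E. \<forall>f\<in>E. crosses e f \<longrightarrow> card (J n E e f) \<le> 4)"

definition is_chain :: "'a set set \<Rightarrow> 'a set set \<Rightarrow> bool" where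
  "is_chain P C \<longleftrightarrow> C \<subseteq> P \<and> (\<forall>x\<in>C. \<forall>y\<in>C. x \<subseteq> y \<or> y \<subseteq> x)"

definition is_maximal_chain :: "'a set set \<Rightarrow> 'a set set \<Rightarrow> bool" where
  "is_maximal_chain P C \<longleftrightarrow> is_chain P C \<and> (\<forall>D. is_chain P D \<and> C \<subseteq> D \<longrightarrow> D = C)"

definition graded :: "'a set set \<Rightarrow> bool" where
  "graded P \<longleftrightarrow> (\<forall>C D. is_maximal_chain P C \<and> is_maximal_chain P D \<longrightarrow> card C = card D)"

end

theory Submission
  imports Defs
begin

(* The number of components of a noncrossing bond is a rank function for NC_G. It drops along
   every strict inclusion, and whenever F < F' there is a noncrossing bond H with F < H <= F'
   having exactly one component fewer than F. Since the empty bond and E itself lie in NC_G,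
   the rank takes every value between its extremes along any maximal chain, so all maximal
   chains have the same length.

   To find H, pick an edge xy of G joining two components of F inside one component of F' and
   merge these two components. The result is noncrossing unless some other component of F has
   a chord separating x from y. That component then contains an F-edge st crossing xy; tight
   closure forces J(xy, st) = {x, y, s, t}, so G has an edge from {x, y} to {s, t}, and this
   edge is separated by strictly fewer components than xy. Iterating yields an edge whose two
   components can be merged. *)

section \<open>Components of spanning subgraphs\<close>

lemma same_comp_refl [simp]: "same_comp F u u"
  by (simp add: same_comp_def)

lemma same_comp_sym: "same_comp F u v \<Longrightarrow> same_comp F v u"
  unfolding same_comp_def by (metis adj_def sympD sympI symp_rtranclp)

lemma same_comp_trans: "same_comp F u v \<Longrightarrow> same_comp F v w \<Longrightarrow> same_comp F u w"
  unfolding same_comp_def by (rule rtranclp_trans)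

lemma adj_mono: "F \<subseteq> F' \<Longrightarrow> adj F u v \<Longrightarrow> adj F' u v"
  unfolding adj_def by auto

lemma same_comp_mono: "F \<subseteq> F' \<Longrightarrow> same_comp F u v \<Longrightarrow> same_comp F' u v"
  unfolding same_comp_def by (erule rtranclp_mono[THEN predicate2D, rotated]) (auto simp: adj_def)

lemma same_comp_adj: "adj F u v \<Longrightarrow> same_comp F u v"
  unfolding same_comp_def by (rule r_into_rtranclp)

lemma same_comp_edge: "(u, v) \<in> F \<Longrightarrow> same_comp F u v"
  by (simp add: adj_def same_comp_adj)

lemma same_comp_min_max: "same_comp F (min u v) (max u v) \<longleftrightarrow> same_comp F u v"
  by (cases "u \<le> v") (auto simp: min_def max_def dest: same_comp_sym)

lemma same_comp_empty: "same_comp {} u v \<longleftrightarrow> u = v"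
proof
  show "same_comp {} u v \<Longrightarrow> u = v"
    unfolding same_comp_def by (induction rule: rtranclp_induct) (auto simp: adj_def)
qed simp

lemma adj_in_vertices: "simple_graph n E \<Longrightarrow> adj E u v \<Longrightarrow> u \<in> {1..n} \<and> v \<in> {1..n} \<and> u \<noteq> v"
  unfolding simple_graph_def adj_def by auto

lemma adj_min_max: "simple_graph n E \<Longrightarrow> adj E u v \<Longrightarrow> (min u v, max u v) \<in> E"
  unfolding simple_graph_def adj_def by (auto simp: min_def max_def)

lemma same_comp_in_vertices:
  assumes "simple_graph n E" "F \<subseteq> E" "same_comp F u v" "u \<noteq> v"
  shows "u \<in> {1..n} \<and> v \<in> {1..n}"
proof -
  have "u = v \<or> u \<in> {1..n} \<and> v \<in> {1..n}"
    using assms(3) unfolding same_comp_def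
  proof (induction rule: rtranclp_induct)
    case (step v w)
    then show ?case using adj_in_vertices[OF assms(1) adj_mono[OF assms(2)]] by blast
  qed simp
  then show ?thesis using assms(4) by blast
qed

lemma rtranclp_exit:
  assumes "r\<^sup>*\<^sup>* a b" "P a" "\<not> P b"
  shows "\<exists>u v. r\<^sup>*\<^sup>* a u \<and> r u v \<and> P u \<and> \<not> P v"
  using assms
proof (induction rule: rtranclp_induct)
  case (step y z)
  then show ?case by (cases "P y") (blast intro: rtranclp.rtrancl_into_rtrancl)+
qed simp

lemma bond_edge_iff: "is_bond n E F \<Longrightarrow> (i, j) \<in> E \<Longrightarrow> (i, j) \<in> F \<longleftrightarrow> same_comp F i j"
  unfolding is_bond_def using same_comp_edge by blast

lemma NC_subset_edges: "F \<in> NC n E \<Longrightarrow> F \<subseteq> E"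
  unfolding NC_def noncrossing_bond_def is_bond_def by auto

lemma finite_NC:
  assumes "simple_graph n E"
  shows "finite (NC n E)"
proof -
  have "finite E"
    using assms unfolding simple_graph_def
    by (rule finite_subset) (auto intro: finite_subset[of _ "{1..n} \<times> {1..n}"])
  then show ?thesis using NC_subset_edges by (meson Pow_iff finite_Pow_iff finite_subset subsetI)
qed

lemma empty_in_NC: "simple_graph n E \<Longrightarrow> {} \<in> NC n E"
  unfolding NC_def noncrossing_bond_def is_bond_def simple_graph_def by (auto simp: same_comp_empty)

section \<open>Chords and separation\<close>

definition between :: "nat \<Rightarrow> nat \<Rightarrow> nat \<Rightarrow> bool" where
  "between u v w \<longleftrightarrow> min u v < w \<and> w < max u v"

lemma between_iff: "w \<noteq> u \<Longrightarrow> w \<noteq> v \<Longrightarrow> between u v w \<longleftrightarrow> (u < w) \<noteq> (v < w)"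
  unfolding between_def by (cases "u < v") (auto simp: min_def max_def)

lemma between_sym: "between u v w = between v u w"
  by (simp add: between_def min.commute max.commute)

lemma between_ordered: "u < v \<Longrightarrow> between u v w \<longleftrightarrow> u < w \<and> w < v"
  by (simp add: between_def)

lemma between_swap:
  assumes "x \<noteq> y" "c1 \<notin> {x, y}" "c2 \<notin> {x, y}" "between c1 c2 x \<noteq> between c1 c2 y"
  shows "between x y c1 \<noteq> between x y c2"
proof -
  have "x \<noteq> c1" "x \<noteq> c2" "y \<noteq> c1" "y \<noteq> c2" using assms(2,3) by auto
  then show ?thesis using assms(4) between_iff[of x c1 c2] between_iff[of y c1 c2]
    between_iff[of c1 x y] between_iff[of c2 x y] by (auto simp: not_less_iff_gr_or_eq)
qed

lemma min_max_eq: "{min a b, max a b} = {a, b}"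
  by (auto simp: min_def max_def)

lemma crosses_ordered:
  assumes "lo < hi" "a < b" "a \<notin> {lo, hi}" "b \<notin> {lo, hi}" "(lo < a \<and> a < hi) \<noteq> (lo < b \<and> b < hi)"
  shows "crosses (lo, hi) (a, b)"
  using assms unfolding crosses_def by auto

lemma crosses_if_between:
  assumes "s \<notin> {u, v}" "t \<notin> {u, v}" and sides: "between u v s \<noteq> between u v t"
  shows "crosses (min u v, max u v) (min s t, max s t)"
proof -
  have uv: "min u v < max u v" using sides unfolding between_def by auto
  have "s \<noteq> t" using sides by auto
  then have st: "min s t < max s t" by (cases "s < t") auto
  have ends: "min s t \<notin> {min u v, max u v}" "max s t \<notin> {min u v, max u v}"
    using assms(1,2) unfolding min_max_eq[of u v] by (auto simp: min_def max_def)
  have "between u v (min s t) \<noteq> between u v (max s t)"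
    using sides by (cases "s \<le> t") (simp_all add: min_def max_def)
  then show ?thesis by (rule crosses_ordered[OF uv st ends, folded between_def])
qed

(* Points not separated by C lie in the same region of the disc cut out by the chords of C. *)
definition separates :: "nat set \<Rightarrow> nat \<Rightarrow> nat \<Rightarrow> bool" where
  "separates C x y \<longleftrightarrow> (\<exists>c1\<in>C. \<exists>c2\<in>C. between c1 c2 x \<noteq> between c1 c2 y)"

lemma separates_ordered:
  "separates C x y \<longleftrightarrow> (\<exists>c1\<in>C. \<exists>c2\<in>C. c1 < c2 \<and> (c1 < x \<and> x < c2) \<noteq> (c1 < y \<and> y < c2))"
proof
  assume "separates C x y"
  then obtain c1 c2 where c: "c1 \<in> C" "c2 \<in> C" "between c1 c2 x \<noteq> between c1 c2 y"
    unfolding separates_def by blast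
  then have "c1 \<noteq> c2" by (auto simp: between_def)
  then consider "c1 < c2" | "c2 < c1" by linarith
  then show "\<exists>c1\<in>C. \<exists>c2\<in>C. c1 < c2 \<and> (c1 < x \<and> x < c2) \<noteq> (c1 < y \<and> y < c2)"
  proof cases
    case 1
    then show ?thesis using c by (auto simp: between_ordered)
  next
    case 2
    then show ?thesis using c by (auto simp: between_sym[of c1] between_ordered)
  qed
next
  assume "\<exists>c1\<in>C. \<exists>c2\<in>C. c1 < c2 \<and> (c1 < x \<and> x < c2) \<noteq> (c1 < y \<and> y < c2)"
  then show "separates C x y" unfolding separates_def by (metis between_ordered)
qed

lemma separates_chord:
  "c1 \<in> C \<Longrightarrow> c2 \<in> C \<Longrightarrow> c1 < c2 \<Longrightarrow> (c1 < x \<and> x < c2) \<noteq> (c1 < y \<and> y < c2) \<Longrightarrow> separates C x y"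
  unfolding separates_ordered by blast

lemma separates_sym: "separates C x y = separates C y x"
  unfolding separates_def by blast

lemma not_separates_trans: "\<not> separates C x y \<Longrightarrow> \<not> separates C y z \<Longrightarrow> \<not> separates C x z"
  unfolding separates_def by blast

lemma not_separates_from_other_region:
  assumes "c \<in> C" "C \<inter> D = {}" "x \<notin> C" "y \<notin> C" "x \<notin> D" "y \<notin> D"
    and C_region: "\<And>c'. c' \<in> C \<Longrightarrow> \<not> separates D c c'"
    and "separates D x c" "\<not> separates D x y"
  shows "\<not> separates C x y"
proof
  assume "separates C x y"
  then obtain c1 c2 where c: "c1 \<in> C" "c2 \<in> C" "c1 < c2" "(c1 < x \<and> x < c2) \<noteq> (c1 < y \<and> y < c2)"
    unfolding separates_ordered by blast
  obtain d1 d2 where d: "d1 \<in> D" "d2 \<in> D" "d1 < d2" "(d1 < x \<and> x < d2) \<noteq> (d1 < c \<and> c < d2)"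
    using assms(8) unfolding separates_ordered by blast
  have xy: "(d1 < x \<and> x < d2) = (d1 < y \<and> y < d2)"
    using assms(9) d unfolding separates_ordered by blast
  have c12: "(d1 < c \<and> c < d2) = (d1 < c1 \<and> c1 < d2)" "(d1 < c \<and> c < d2) = (d1 < c2 \<and> c2 < d2)"
    using C_region c d unfolding separates_ordered by blast+
  have ne: "c1 \<noteq> d1" "c1 \<noteq> d2" "c2 \<noteq> d1" "c2 \<noteq> d2"
    using assms(2) c d by auto
  show False
  proof (cases "d1 < x \<and> x < d2")
    case True
    then have "d1 < y" "y < d2" using xy by auto
    moreover have "\<not> (d1 < c1 \<and> c1 < d2)" "\<not> (d1 < c2 \<and> c2 < d2)" using True d(4) c12 by auto
    ultimately have "c1 < d1 \<or> d2 < c1" "c2 < d1 \<or> d2 < c2"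
      using ne by auto
    then show False using c(3,4) True \<open>d1 < y\<close> \<open>y < d2\<close> by auto
  next
    case False
    then have "d1 < c1" "c1 < d2" "d1 < c2" "c2 < d2" using d(4) c12 by auto
    then show False using c(3,4) False xy by auto
  qed
qed

lemma not_separates_both_ways:
  assumes "c \<in> C" "y \<in> Y" "C \<inter> Y = {}" "x \<notin> C" "x \<notin> Y"
    and C_region: "\<And>c'. c' \<in> C \<Longrightarrow> \<not> separates Y c c'"
    and Y_region: "\<And>y'. y' \<in> Y \<Longrightarrow> \<not> separates C y y'"
    and "separates C x y"
  shows "\<not> separates Y x c"
proof
  assume "separates Y x c"
  then obtain d1 d2 where d: "d1 \<in> Y" "d2 \<in> Y" "d1 < d2" "(d1 < x \<and> x < d2) \<noteq> (d1 < c \<and> c < d2)"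
    unfolding separates_ordered by blast
  obtain c1 c2 where c: "c1 \<in> C" "c2 \<in> C" "c1 < c2" "(c1 < x \<and> x < c2) \<noteq> (c1 < y \<and> y < c2)"
    using assms(8) unfolding separates_ordered by blast
  have c12: "(d1 < c \<and> c < d2) = (d1 < c1 \<and> c1 < d2)" "(d1 < c \<and> c < d2) = (d1 < c2 \<and> c2 < d2)"
    using C_region d c unfolding separates_ordered by blast+
  have d12: "(c1 < y \<and> y < c2) = (c1 < d1 \<and> d1 < c2)" "(c1 < y \<and> y < c2) = (c1 < d2 \<and> d2 < c2)"
    using Y_region d c unfolding separates_ordered by blast+
  have ne: "c1 \<noteq> d1" "c1 \<noteq> d2" "c2 \<noteq> d1" "c2 \<noteq> d2"
    using assms(3) c d by auto
  show False
  proof (cases "d1 < c \<and> c < d2")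
    case True
    then show False using c d c12 d12 by auto
  next
    case False
    then have x: "d1 < x" "x < d2" using d(4) by auto
    have "\<not> (d1 < c1 \<and> c1 < d2)" "\<not> (d1 < c2 \<and> c2 < d2)" using False c12 by auto
    then have "c1 < d1 \<or> d2 < c1" "c2 < d1 \<or> d2 < c2" using ne by auto
    then show False using c(3,4) d12 x by auto
  qed
qed

section \<open>Noncrossing bonds\<close>

(* card (comp_mins n F) is the number of components of ([n], F). *)
definition comp_mins :: "nat \<Rightarrow> (nat \<times> nat) set \<Rightarrow> nat set" where
  "comp_mins n F = {i \<in> {1..n}. \<forall>j. same_comp F i j \<longrightarrow> i \<le> j}"

lemma finite_comp_mins: "finite (comp_mins n F)"
  unfolding comp_mins_def by auto

lemma comp_mins_antimono:
  "(\<And>i j. same_comp F i j \<Longrightarrow> same_comp F' i j) \<Longrightarrow> comp_mins n F' \<subseteq> comp_mins n F"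
  unfolding comp_mins_def by auto

locale nc_bond =
  fixes n :: nat and E F :: "(nat \<times> nat) set"
  assumes simple: "simple_graph n E" and noncrossing: "noncrossing_bond n E F"
begin

abbreviation comp :: "nat \<Rightarrow> nat \<Rightarrow> bool" (infix "\<approx>" 50) where
  "u \<approx> v \<equiv> same_comp F u v"

definition block :: "nat \<Rightarrow> nat set" where
  "block z = {w. z \<approx> w}"

lemma mem_block [simp]: "w \<in> block z \<longleftrightarrow> z \<approx> w"
  by (simp add: block_def)

lemma block_disjoint: "\<not> u \<approx> v \<Longrightarrow> block u \<inter> block v = {}"
  by (auto, meson same_comp_sym same_comp_trans)

lemma bond: "is_bond n E F"
  using noncrossing unfolding noncrossing_bond_def by blast

lemma F_subset_E: "F \<subseteq> E"
  using bond unfolding is_bond_def by blast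

lemma comp_in_vertices: "u \<approx> v \<Longrightarrow> u \<noteq> v \<Longrightarrow> u \<in> {1..n} \<and> v \<in> {1..n}"
  using same_comp_in_vertices[OF simple F_subset_E] by blast

lemma noncrossing_comp:
  assumes "a < b" "b < c" "c < d" "a \<approx> c" "b \<approx> d"
  shows "a \<approx> b"
proof -
  have "a \<in> {1..n}" "b \<in> {1..n}" "c \<in> {1..n}" "d \<in> {1..n}"
    using comp_in_vertices assms by force+
  then show ?thesis using noncrossing assms unfolding noncrossing_bond_def by blast
qed

lemma chord_joins_comp:
  assumes "d1 < p" "p < d2" "\<not> (d1 < q \<and> q < d2)" "q \<noteq> d1" "q \<noteq> d2" "d1 \<approx> d2" "p \<approx> q"
  shows "d1 \<approx> p"
proof (cases "q < d1")
  case True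
  then have "q \<approx> d1" using noncrossing_comp[of q d1 p d2] assms by (blast dest: same_comp_sym)
  then show ?thesis using assms(7) by (blast dest: same_comp_sym same_comp_trans)
next
  case False
  then have "d2 < q" using assms(3-5) by linarith
  then show ?thesis using noncrossing_comp[of d1 p d2 q] assms by blast
qed

lemma block_in_one_region:
  assumes "\<not> b \<approx> a" "a \<approx> c" "a \<approx> c'"
  shows "\<not> separates (block b) c c'"
proof
  assume "separates (block b) c c'"
  then obtain d1 d2 where "d1 \<in> block b" "d2 \<in> block b"
    and d: "d1 < d2" "(d1 < c \<and> c < d2) \<noteq> (d1 < c' \<and> c' < d2)"
    unfolding separates_ordered by blast
  then have "b \<approx> d1" "b \<approx> d2" by simp_all
  then have "d1 \<approx> d2" "c \<approx> c'" using assms by (meson same_comp_sym same_comp_trans)+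
  moreover have "\<not> d1 \<approx> c" "\<not> d1 \<approx> c'" "c \<noteq> d1" "c \<noteq> d2" "c' \<noteq> d1" "c' \<noteq> d2"
    using \<open>b \<approx> d1\<close> \<open>b \<approx> d2\<close> assms by (meson same_comp_sym same_comp_trans)+
  ultimately show False
    using d(2) chord_joins_comp[of d1 c d2 c'] chord_joins_comp[of d1 c' d2 c]
    by (blast dest: same_comp_sym)
qed

lemma separates_block_cong:
  assumes "separates (block b) a c" "a \<approx> a'" "c \<approx> c'" "\<not> b \<approx> a" "\<not> b \<approx> c"
  shows "separates (block b) a' c'"
  using assms not_separates_trans block_in_one_region[of b a a a'] block_in_one_region[of b c c c']
  by (metis same_comp_refl separates_sym)

lemma comp_crossing_chord:
  assumes "u \<approx> v" "s \<approx> t" "s \<notin> {u, v}" "t \<notin> {u, v}" "between u v s \<noteq> between u v t"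
  shows "u \<approx> s"
proof -
  define lo hi where "lo = min u v" and "hi = max u v"
  have ends: "lo = u \<and> hi = v \<or> lo = v \<and> hi = u" unfolding lo_def hi_def by auto
  then have "lo \<approx> hi" using assms(1) by (blast dest: same_comp_sym)
  have "lo \<approx> s"
  proof (cases "lo < s \<and> s < hi")
    case True
    then show ?thesis using chord_joins_comp[of lo s hi t] assms ends \<open>lo \<approx> hi\<close>
      unfolding between_def lo_def hi_def by auto
  next
    case False
    then have "lo \<approx> t" using chord_joins_comp[of lo t hi s] assms ends \<open>lo \<approx> hi\<close>
      unfolding between_def lo_def hi_def by (auto dest: same_comp_sym)
    then show ?thesis using assms(2) by (blast dest: same_comp_sym same_comp_trans)
  qed
  then show ?thesis using ends assms(1) by (blast dest: same_comp_sym same_comp_trans)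
qed

(* Merging the blocks of the ends of an edge xy keeps the bond noncrossing when there are no
   blockers. *)
definition blockers :: "nat \<Rightarrow> nat \<Rightarrow> nat set" where
  "blockers x y = {z \<in> {1..n}. \<not> z \<approx> x \<and> \<not> z \<approx> y \<and> separates (block z) x y}"

lemma blockers_sym: "blockers x y = blockers y x"
  unfolding blockers_def using separates_sym by blast

lemma finite_blockers: "finite (blockers x y)"
  unfolding blockers_def by auto

lemma blockers_psubset:
  assumes "z \<in> blockers u v" "z \<approx> w" "\<not> u \<approx> v"
  shows "blockers u w \<subset> blockers u v"
proof -
  have z: "\<not> z \<approx> u" "\<not> z \<approx> v" "separates (block z) u v"
    using assms(1) unfolding blockers_def by auto
  have "q \<in> blockers u v" if "q \<in> blockers u w" for q
  proof -
    have q: "q \<in> {1..n}" "\<not> q \<approx> u" "\<not> q \<approx> w" "separates (block q) u w"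
      using that unfolding blockers_def by auto
    have "\<not> q \<approx> z" using q(3) assms(2) by (blast dest: same_comp_trans)
    have "\<not> q \<approx> v"
    proof
      assume "q \<approx> v"
      then have "block q = block v"
        unfolding block_def by (intro Collect_cong) (meson same_comp_sym same_comp_trans)
      have "\<not> separates (block v) u w"
      proof (rule not_separates_both_ways[of w "block z" v])
        show "\<not> separates (block v) w c'" if "c' \<in> block z" for c'
          using block_in_one_region[of v z w c'] that assms(2) z(2) same_comp_sym by auto
        show "\<not> separates (block z) v y'" if "y' \<in> block v" for y'
          using block_in_one_region[of z v v y'] that z(2) by simp
      qed (use assms(2,3) z block_disjoint[of z v] in \<open>auto dest: same_comp_sym\<close>)
      then show False using q(4) \<open>block q = block v\<close> by simp
    qed
    have "separates (block q) u v"
    proof (rule ccontr)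
      assume "\<not> separates (block q) u v"
      have "\<not> separates (block z) u v"
      proof (rule not_separates_from_other_region[of w "block z" "block q"])
        show "\<not> separates (block q) w c'" if "c' \<in> block z" for c'
          using block_in_one_region[of q z w c'] that assms(2) \<open>\<not> q \<approx> z\<close> by simp
      qed (use assms(2) z q \<open>\<not> q \<approx> v\<close> \<open>\<not> q \<approx> z\<close> \<open>\<not> separates (block q) u v\<close>
             block_disjoint[of z q] in \<open>auto dest: same_comp_sym\<close>)
      then show False using z(3) by simp
    qed
    then show ?thesis using q \<open>\<not> q \<approx> v\<close> unfolding blockers_def by auto
  qed
  moreover have "z \<notin> blockers u w" using assms(2) unfolding blockers_def by auto
  ultimately show ?thesis using assms(1) by auto
qed

lemma blocker_crossing_edge:
  assumes "z \<in> blockers x y"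
  obtains s t where "adj F s t" "z \<approx> s" "z \<approx> t" "s \<notin> {x, y}" "t \<notin> {x, y}"
    "between x y s \<noteq> between x y t"
proof -
  have z: "\<not> z \<approx> x" "\<not> z \<approx> y" "separates (block z) x y"
    using assms unfolding blockers_def by auto
  then obtain c1 c2 where "c1 \<in> block z" "c2 \<in> block z" and sides: "between c1 c2 x \<noteq> between c1 c2 y"
    unfolding separates_def by blast
  then have c: "z \<approx> c1" "z \<approx> c2" "between c1 c2 x \<noteq> between c1 c2 y" by simp_all
  then have "x \<noteq> y" "c1 \<notin> {x, y}" "c2 \<notin> {x, y}" using z by auto
  then have "between x y c1 \<noteq> between x y c2" using between_swap sides by blast
  moreover have "(adj F)\<^sup>*\<^sup>* c1 c2"
    using c unfolding same_comp_def[symmetric] by (meson same_comp_sym same_comp_trans)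
  ultimately obtain s t where st: "(adj F)\<^sup>*\<^sup>* c1 s" "adj F s t" "between x y s \<noteq> between x y t"
    using rtranclp_exit[of "adj F" c1 c2 "\<lambda>w. between x y w = between x y c1"] by auto
  have "z \<approx> s" using st(1) c(1) unfolding same_comp_def[symmetric] by (rule same_comp_trans[rotated])
  moreover have "z \<approx> t" using \<open>z \<approx> s\<close> same_comp_adj[OF st(2)] by (rule same_comp_trans)
  ultimately show thesis using that st(2,3) z by auto
qed

definition merge :: "nat \<Rightarrow> nat \<Rightarrow> (nat \<times> nat) set" where
  "merge x y = F \<union> {(i, j) \<in> E. i \<in> block x \<union> block y \<and> j \<in> block x \<union> block y}"

lemma min_max_in_merge: "adj E x y \<Longrightarrow> (min x y, max x y) \<in> merge x y"
  using adj_min_max[OF simple] unfolding merge_def by (simp add: min_def max_def)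

lemma same_comp_merge:
  assumes "adj E x y"
  shows "same_comp (merge x y) i j \<longleftrightarrow> i \<approx> j \<or> i \<in> block x \<union> block y \<and> j \<in> block x \<union> block y"
proof -
  define M where "M = block x \<union> block y"
  have M_closed: "j \<in> M" if "i \<in> M" "i \<approx> j" for i j
    using that same_comp_trans unfolding M_def by auto
  have xy: "same_comp (merge x y) x y"
    using same_comp_edge[OF min_max_in_merge[OF assms]] same_comp_min_max by blast
  have "F \<subseteq> merge x y" unfolding merge_def by auto
  note F_merge = same_comp_mono[OF this]
  have "i \<approx> j \<or> i \<in> M \<and> j \<in> M" if "same_comp (merge x y) i j"
    using that unfolding same_comp_def[of "merge x y"]
  proof (induction rule: rtranclp_induct)
    case (step j k)
    have "j \<approx> k \<or> j \<in> M \<and> k \<in> M"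
      using step.hyps(2) unfolding adj_def merge_def M_def by (auto intro: same_comp_edge same_comp_sym)
    then show ?case using step.IH M_closed by (meson same_comp_sym same_comp_trans)
  qed simp
  moreover have "same_comp (merge x y) i j" if "i \<in> M" "j \<in> M"
    using that unfolding M_def by auto (meson F_merge same_comp_sym same_comp_trans xy)+
  ultimately show ?thesis using F_merge unfolding M_def by blast
qed

lemma F_psubset_merge:
  assumes "adj E x y" "\<not> x \<approx> y"
  shows "F \<subset> merge x y"
proof -
  have "(min x y, max x y) \<notin> F"
    using assms(2) same_comp_edge same_comp_min_max by blast
  then show ?thesis using min_max_in_merge[OF assms(1)] unfolding merge_def by blast
qed

lemma merge_bond: "adj E x y \<Longrightarrow> is_bond n E (merge x y)"
  using bond same_comp_merge F_subset_E unfolding is_bond_def merge_def by auto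

lemma blocker_if_separates_merged:
  assumes "b \<in> {1..n}" "b \<notin> block x \<union> block y" "a \<in> block x \<union> block y" "c \<in> block x \<union> block y"
    "\<not> a \<approx> c" "separates (block b) a c"
  shows "b \<in> blockers x y"
proof -
  have not_b: "\<not> b \<approx> w" if "w \<in> block x \<union> block y" for w
  proof
    assume "b \<approx> w"
    moreover have "x \<approx> w \<or> y \<approx> w" using that by simp
    ultimately have "x \<approx> b \<or> y \<approx> b" using same_comp_sym same_comp_trans by blast
    then show False using assms(2) by simp
  qed
  have "x \<approx> a \<or> y \<approx> a" "x \<approx> c \<or> y \<approx> c" using assms(3,4) by simp_all
  then have "x \<approx> a \<and> y \<approx> c \<or> y \<approx> a \<and> x \<approx> c"
    using assms(5) same_comp_trans[OF same_comp_sym] by blast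
  moreover have "\<not> b \<approx> a" "\<not> b \<approx> c" using not_b assms(3,4) by blast+
  ultimately have "separates (block b) x y \<or> separates (block b) y x"
    using separates_block_cong[OF assms(6)] same_comp_sym by blast
  then have "separates (block b) x y" using separates_sym by blast
  moreover have "\<not> b \<approx> x" "\<not> b \<approx> y" using not_b by simp_all
  ultimately show ?thesis using assms(1) unfolding blockers_def by blast
qed

lemma merge_in_NC:
  assumes "adj E x y" "blockers x y = {}"
  shows "merge x y \<in> NC n E"
proof -
  define M where "M = block x \<union> block y"
  note comp_merge = same_comp_merge[OF assms(1), folded M_def]
  have no_blocker: "False"
    if "b \<in> {1..n}" "b \<notin> M" "a \<in> M" "c \<in> M" "\<not> a \<approx> c" "separates (block b) a c" for a b c
    using blocker_if_separates_merged[OF that[unfolded M_def]] assms(2) by blast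
  have "same_comp (merge x y) a b"
    if "a < b" "b < c" "c < d" "same_comp (merge x y) a c" "same_comp (merge x y) b d"
      "a \<in> {1..n}" "b \<in> {1..n}" for a b c d
  proof (rule ccontr)
    assume "\<not> same_comp (merge x y) a b"
    then have ab: "\<not> a \<approx> b" "\<not> (a \<in> M \<and> b \<in> M)" using comp_merge by auto
    consider "\<not> a \<approx> c" | "a \<approx> c" "\<not> b \<approx> d" | "a \<approx> c" "b \<approx> d" by blast
    then show False
    proof cases
      case 1
      then have "a \<in> M" "c \<in> M" "b \<notin> M" using that(4) ab comp_merge by auto
      then have "b \<approx> d" using that(5) comp_merge by auto
      then have "separates (block b) a c"
        using separates_chord[of b "block b" d a c] that(1-3) by simp
      then show False using no_blocker 1 \<open>a \<in> M\<close> \<open>c \<in> M\<close> \<open>b \<notin> M\<close> that(7) by blast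
    next
      case 2
      then have "b \<in> M" "d \<in> M" "a \<notin> M" using that(5) ab comp_merge by auto
      have "separates (block a) b d"
        using separates_chord[of a "block a" c b d] 2 that(1-3) by simp
      then show False using no_blocker 2 \<open>b \<in> M\<close> \<open>d \<in> M\<close> \<open>a \<notin> M\<close> that(6) by blast
    next
      case 3
      then show False using noncrossing_comp that(1-3) ab(1) by blast
    qed
  qed
  then show ?thesis using merge_bond[OF assms(1)] unfolding NC_def noncrossing_bond_def by blast
qed

definition rep :: "nat \<Rightarrow> nat" where
  "rep x = (LEAST j. x \<approx> j)"

lemma rep_comp: "x \<approx> rep x"
  unfolding rep_def by (rule LeastI[of _ x]) simp

lemma rep_le: "x \<approx> j \<Longrightarrow> rep x \<le> j"
  unfolding rep_def by (rule Least_le)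

lemma rep_in_comp_mins:
  assumes "x \<in> {1..n}"
  shows "rep x \<in> comp_mins n F"
proof -
  have "rep x \<in> {1..n}" using assms comp_in_vertices[OF rep_comp] by (cases "rep x = x") auto
  moreover have "rep x \<le> j" if "rep x \<approx> j" for j
    using rep_le same_comp_trans[OF rep_comp that] by blast
  ultimately show ?thesis unfolding comp_mins_def by blast
qed

lemma comp_min_eq_rep:
  assumes "i \<in> comp_mins n F" "x \<approx> i"
  shows "i = rep x"
proof (rule antisym)
  have "i \<approx> rep x" using assms(2) rep_comp same_comp_sym same_comp_trans by blast
  then show "i \<le> rep x" using assms(1) unfolding comp_mins_def by blast
  show "rep x \<le> i" using rep_le assms(2) .
qed

lemma max_rep_notin_comp_mins:
  assumes "\<And>i j. i \<approx> j \<Longrightarrow> same_comp G i j" "same_comp G x y" "\<not> x \<approx> y"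
  shows "max (rep x) (rep y) \<notin> comp_mins n G"
proof
  assume max_in: "max (rep x) (rep y) \<in> comp_mins n G"
  have "rep x \<noteq> rep y"
  proof
    assume "rep x = rep y"
    then have "x \<approx> rep y" using rep_comp[of x] by simp
    then show False using assms(3) same_comp_trans[OF _ same_comp_sym[OF rep_comp[of y]]] by blast
  qed
  have "same_comp G (rep x) (rep y)"
    using assms(1)[OF same_comp_sym[OF rep_comp[of x]]] assms(2) assms(1)[OF rep_comp[of y]]
    by (blast intro: same_comp_trans)
  then have "same_comp G (max (rep x) (rep y)) (min (rep x) (rep y))"
    using same_comp_min_max same_comp_sym by blast
  then have "max (rep x) (rep y) \<le> min (rep x) (rep y)" using max_in unfolding comp_mins_def by blast
  then show False using \<open>rep x \<noteq> rep y\<close> by (simp add: max_def min_def split: if_splits)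
qed

lemma comp_mins_merge:
  assumes "adj E x y" "\<not> x \<approx> y"
  shows "comp_mins n (merge x y) = comp_mins n F - {max (rep x) (rep y)}"
proof
  note comp_merge = same_comp_merge[OF assms(1)]
  have F_merge: "same_comp (merge x y) i j" if "i \<approx> j" for i j
    using comp_merge[of i j] that by blast
  have "same_comp (merge x y) x y" using comp_merge[of x y] by simp
  then show "comp_mins n (merge x y) \<subseteq> comp_mins n F - {max (rep x) (rep y)}"
    using comp_mins_antimono[OF F_merge] max_rep_notin_comp_mins[OF F_merge _ assms(2)] by blast
  show "comp_mins n F - {max (rep x) (rep y)} \<subseteq> comp_mins n (merge x y)"
  proof
    fix i assume i: "i \<in> comp_mins n F - {max (rep x) (rep y)}"
    have "i \<le> j" if ij: "same_comp (merge x y) i j" for j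
    proof -
      consider "i \<approx> j" | "i \<in> block x \<union> block y" "j \<in> block x \<union> block y"
        using ij comp_merge[of i j] by blast
      then show ?thesis
      proof cases
        case 1
        then show ?thesis using i unfolding comp_mins_def by blast
      next
        case 2
        then have "x \<approx> i \<or> y \<approx> i" "x \<approx> j \<or> y \<approx> j" by simp_all
        then have "i = rep x \<or> i = rep y" "rep x \<le> j \<or> rep y \<le> j"
          using i comp_min_eq_rep rep_le by blast+
        moreover have "i \<noteq> max (rep x) (rep y)" using i by blast
        ultimately have "i \<le> rep x" "i \<le> rep y" by (auto simp: max_def split: if_splits)
        then show ?thesis using \<open>rep x \<le> j \<or> rep y \<le> j\<close> by linarith
      qed
    qed
    then show "i \<in> comp_mins n (merge x y)" using i unfolding comp_mins_def by blast
  qed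
qed

lemma card_comp_mins_merge:
  assumes "adj E x y" "\<not> x \<approx> y"
  shows "card (comp_mins n (merge x y)) + 1 = card (comp_mins n F)"
proof -
  have "max (rep x) (rep y) \<in> comp_mins n F"
    using rep_in_comp_mins adj_in_vertices[OF simple assms(1)] by (simp add: max_def)
  then show ?thesis
    using comp_mins_merge[OF assms] card_Suc_Diff1[OF finite_comp_mins] by simp
qed

lemma card_comp_mins_psubset:
  assumes "F \<subset> F'" "F' \<subseteq> E"
  shows "card (comp_mins n F') < card (comp_mins n F)"
proof -
  obtain a b where ab: "(a, b) \<in> F'" "(a, b) \<notin> F" using assms(1) by auto
  then have "adj E a b" "\<not> a \<approx> b"
    using assms(2) bond_edge_iff[OF bond] unfolding adj_def by auto
  have F_F': "same_comp F' i j" if "i \<approx> j" for i j using same_comp_mono assms(1) that by blast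
  have "max (rep a) (rep b) \<in> comp_mins n F"
    using rep_in_comp_mins adj_in_vertices[OF simple \<open>adj E a b\<close>] by (simp add: max_def)
  moreover have "max (rep a) (rep b) \<notin> comp_mins n F'"
    using max_rep_notin_comp_mins[OF F_F' same_comp_edge[OF ab(1)] \<open>\<not> a \<approx> b\<close>] .
  ultimately have "comp_mins n F' \<subset> comp_mins n F" using comp_mins_antimono[OF F_F'] by blast
  then show ?thesis by (rule psubset_card_mono[OF finite_comp_mins])
qed

end

section \<open>Tightly closed graphs\<close>

lemma tightly_closed_crossing_edges_adjacent:
  assumes simple: "simple_graph n E" and "tightly_closed n E" "adj E x y" "adj E s t"
    and "s \<notin> {x, y}" "t \<notin> {x, y}" "between x y s \<noteq> between x y t"
  shows "\<exists>a\<in>{x, y}. \<exists>b\<in>{s, t}. adj E a b"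
proof -
  let ?e = "(min x y, max x y)" and ?f = "(min s t, max s t)"
  define K where "K = J n E ?e ?f"
  have "?e \<in> E" "?f \<in> E" using adj_min_max[OF simple] assms(3,4) by blast+
  moreover have "crosses ?e ?f" using crosses_if_between assms(5-7) .
  ultimately have "\<exists>!S. minimal_cand n E ?e ?f S" "card K \<le> 4"
    using assms(2) unfolding tightly_closed_def crossing_closed_def crossing_closed_pair_def K_def by blast+
  then have "minimal_cand n E ?e ?f K" unfolding K_def J_def by (blast intro: theI')
  then have conn: "induced_connected n E K" and "{min x y, max x y, min s t, max s t} \<subseteq> K"
    unfolding minimal_cand_def conn_cands_def by simp_all
  then have sub: "{x, y, s, t} \<subseteq> K" using min_max_eq[of x y] min_max_eq[of s t] by blast
  have "finite K" using conn unfolding induced_connected_def by (meson finite_atLeastAtMost finite_subset)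
  moreover have "s \<noteq> t" using assms(7) by auto
  then have "card {x, y, s, t} = 4" using adj_in_vertices[OF simple assms(3)] assms(5,6) by auto
  ultimately have K_eq: "K = {x, y, s, t}" using card_seteq[OF _ sub] \<open>card K \<le> 4\<close> by simp
  have "(\<lambda>a b. a \<in> K \<and> b \<in> K \<and> adj E a b)\<^sup>*\<^sup>* x s"
    using conn sub unfolding induced_connected_def by blast
  then obtain a b where "a \<in> K" "b \<in> K" "adj E a b" "a \<in> {x, y}" "b \<notin> {x, y}"
    using rtranclp_exit[of _ x s "\<lambda>w. w \<in> {x, y}"] assms(5) by blast
  then show ?thesis using K_eq by blast
qed

context nc_bond
begin

(* The search for a mergeable edge never leaves a saturated set. Both a block of a coarser
   noncrossing bond and the whole vertex set are saturated. *)
definition saturated :: "nat set \<Rightarrow> bool" where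
  "saturated T \<longleftrightarrow> (\<forall>i j. i \<in> T \<and> i \<approx> j \<longrightarrow> j \<in> T) \<and>
     (\<forall>u v s t. adj E u v \<and> u \<in> T \<and> v \<in> T \<and> s \<approx> t \<and> s \<notin> {u, v} \<and> t \<notin> {u, v} \<and>
        between u v s \<noteq> between u v t \<longrightarrow> s \<in> T)"

lemma saturated_comp: "saturated T \<Longrightarrow> i \<in> T \<Longrightarrow> i \<approx> j \<Longrightarrow> j \<in> T"
  unfolding saturated_def by blast

lemma saturated_cross:
  "saturated T \<Longrightarrow> adj E u v \<Longrightarrow> u \<in> T \<Longrightarrow> v \<in> T \<Longrightarrow> s \<approx> t \<Longrightarrow> s \<notin> {u, v} \<Longrightarrow> t \<notin> {u, v}
    \<Longrightarrow> between u v s \<noteq> between u v t \<Longrightarrow> s \<in> T"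
  unfolding saturated_def by blast

lemma saturated_coarser_comp:
  assumes "nc_bond n E F'" "F \<subseteq> F'"
  shows "saturated {w. same_comp F' a w}"
  unfolding saturated_def
proof (intro conjI allI impI)
  fix i j assume "i \<in> {w. same_comp F' a w} \<and> i \<approx> j"
  then show "j \<in> {w. same_comp F' a w}" using same_comp_mono[OF assms(2)] same_comp_trans by blast
next
  fix u v s t
  assume "adj E u v \<and> u \<in> {w. same_comp F' a w} \<and> v \<in> {w. same_comp F' a w} \<and> s \<approx> t \<and>
    s \<notin> {u, v} \<and> t \<notin> {u, v} \<and> between u v s \<noteq> between u v t"
  then have "same_comp F' a u" "same_comp F' u v" "same_comp F' s t" "s \<notin> {u, v}" "t \<notin> {u, v}"
      "between u v s \<noteq> between u v t"
    using same_comp_mono[OF assms(2)] same_comp_sym same_comp_trans by blast+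
  then have "same_comp F' u s" using nc_bond.comp_crossing_chord[OF assms(1)] by blast
  then show "s \<in> {w. same_comp F' a w}" using \<open>same_comp F' a u\<close> same_comp_trans by blast
qed

lemma exists_edge_fewer_blockers:
  assumes "tightly_closed n E" "saturated T" "adj E x y" "x \<in> T" "y \<in> T" "\<not> x \<approx> y"
    and z: "z \<in> blockers x y"
  obtains a b where "adj E a b" "a \<in> T" "b \<in> T" "\<not> a \<approx> b" "blockers a b \<subset> blockers x y"
proof -
  have "\<not> z \<approx> x" "\<not> z \<approx> y" using z unfolding blockers_def by auto
  obtain s t where st: "adj F s t" "z \<approx> s" "z \<approx> t" "s \<notin> {x, y}" "t \<notin> {x, y}"
    "between x y s \<noteq> between x y t"
    using blocker_crossing_edge[OF z] by blast
  have "s \<approx> t" using st(2,3) same_comp_sym same_comp_trans by blast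
  then have "s \<in> T" using saturated_cross[OF assms(2-5)] st(4-6) by blast
  obtain a b where ab: "a \<in> {x, y}" "b \<in> {s, t}" "adj E a b"
    using tightly_closed_crossing_edges_adjacent[OF simple assms(1,3)
        adj_mono[OF F_subset_E st(1)] st(4-6)] by blast
  have "z \<approx> b" using ab(2) st(2,3) by auto
  then have "b \<in> T"
    using saturated_comp[OF assms(2) \<open>s \<in> T\<close>] same_comp_trans[OF same_comp_sym[OF st(2)]] by blast
  moreover have "a \<in> T" using ab(1) assms(4,5) by auto
  moreover have "\<not> a \<approx> b"
    using ab(1) \<open>z \<approx> b\<close> \<open>\<not> z \<approx> x\<close> \<open>\<not> z \<approx> y\<close> same_comp_sym same_comp_trans by blast
  moreover have "blockers a b \<subset> blockers x y"
  proof (cases "a = x")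
    case True
    then show ?thesis using blockers_psubset[OF z \<open>z \<approx> b\<close> assms(6)] by simp
  next
    case False
    then have "a = y" using ab(1) by simp
    moreover have "z \<in> blockers y x" "\<not> y \<approx> x" using z assms(6) blockers_sym same_comp_sym by auto
    then have "blockers y b \<subset> blockers y x" using blockers_psubset \<open>z \<approx> b\<close> by blast
    ultimately show ?thesis by (simp only: blockers_sym[of x y])
  qed
  ultimately show thesis using that ab(3) by blast
qed

lemma exists_unblocked_edge:
  assumes "tightly_closed n E" "saturated T"
  shows "adj E x y \<Longrightarrow> x \<in> T \<Longrightarrow> y \<in> T \<Longrightarrow> \<not> x \<approx> y \<Longrightarrow>
    \<exists>u v. adj E u v \<and> u \<in> T \<and> v \<in> T \<and> \<not> u \<approx> v \<and> blockers u v = {}"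
proof (induction "card (blockers x y)" arbitrary: x y rule: less_induct)
  case less
  show ?case
  proof (cases "blockers x y = {}")
    case False
    then obtain z where "z \<in> blockers x y" by blast
    then obtain a b where ab: "adj E a b" "a \<in> T" "b \<in> T" "\<not> a \<approx> b" "blockers a b \<subset> blockers x y"
      using exists_edge_fewer_blockers[OF assms less.prems] by blast
    then have "card (blockers a b) < card (blockers x y)"
      using psubset_card_mono[OF finite_blockers] by blast
    then show ?thesis using less.hyps ab(1-4) by blast
  qed (use less.prems in blast)
qed

lemma merge_within_saturated:
  assumes "tightly_closed n E" "saturated T" "adj E a b" "a \<in> T" "b \<in> T" "\<not> a \<approx> b"
  shows "\<exists>G\<in>NC n E. F \<subset> G \<and> card (comp_mins n G) + 1 = card (comp_mins n F) \<and>
    (\<forall>i j. same_comp G i j \<longrightarrow> i \<approx> j \<or> i \<in> T \<and> j \<in> T)"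
proof -
  obtain u v where uv: "adj E u v" "u \<in> T" "v \<in> T" "\<not> u \<approx> v" "blockers u v = {}"
    using exists_unblocked_edge[OF assms] by blast
  have "block u \<union> block v \<subseteq> T" using uv(2,3) saturated_comp[OF assms(2)] by auto
  then have "\<forall>i j. same_comp (merge u v) i j \<longrightarrow> i \<approx> j \<or> i \<in> T \<and> j \<in> T"
    using same_comp_merge[OF uv(1)] by blast
  then show ?thesis
    using merge_in_NC[OF uv(1,5)] F_psubset_merge[OF uv(1,4)] card_comp_mins_merge[OF uv(1,4)] by blast
qed

end

section \<open>Maximal chains\<close>

lemma atLeastAtMost_subset_if_pred_closed:
  fixes a b :: nat
  assumes "b \<in> S" and pred: "\<And>k. k \<in> S \<Longrightarrow> a < k \<Longrightarrow> k - 1 \<in> S"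
  shows "{a..b} \<subseteq> S"
proof
  fix k assume k: "k \<in> {a..b}"
  have "b - j \<in> S" if "j \<le> b - a" for j
    using that
  proof (induction j)
    case (Suc j)
    then have "b - j - 1 \<in> S" using pred[of "b - j"] by simp
    then show ?case by simp
  qed (simp add: assms(1))
  from this[of "b - k"] show "k \<in> S" using k by (simp add: diff_le_mono2)
qed


lemma maximal_chain_card:
  fixes P :: "'a set set" and rk :: "'a set \<Rightarrow> nat"
  assumes "finite P" "Fmin \<in> P" "Fmax \<in> P" and bounds: "\<And>F. F \<in> P \<Longrightarrow> Fmin \<subseteq> F \<and> F \<subseteq> Fmax"
    and rk_strict: "\<And>F G. F \<in> P \<Longrightarrow> G \<in> P \<Longrightarrow> F \<subset> G \<Longrightarrow> rk G < rk F"
    and rk_step: "\<And>F F'. F \<in> P \<Longrightarrow> F' \<in> P \<Longrightarrow> F \<subset> F' \<Longrightarrow> \<exists>G\<in>P. F \<subset> G \<and> G \<subseteq> F' \<and> rk G + 1 = rk F"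
    and "is_maximal_chain P C"
  shows "card C = rk Fmin - rk Fmax + 1"
proof -
  have CP: "C \<subseteq> P" and comparable: "\<And>F G. F \<in> C \<Longrightarrow> G \<in> C \<Longrightarrow> F \<subseteq> G \<or> G \<subseteq> F"
    using assms(7) unfolding is_maximal_chain_def is_chain_def by auto
  have extend: "G \<in> C" if "G \<in> P" "\<And>H. H \<in> C \<Longrightarrow> H \<subseteq> G \<or> G \<subseteq> H" for G
  proof -
    have "is_chain P (insert G C)" unfolding is_chain_def using that CP comparable by blast
    then show ?thesis using assms(7) unfolding is_maximal_chain_def by blast
  qed
  have "Fmin \<in> C" "Fmax \<in> C" using extend assms(2,3) bounds CP by blast+
  have "finite C" using assms(1) CP finite_subset by blast
  have rk_le: "rk G \<le> rk F" if "F \<in> P" "G \<in> P" "F \<subseteq> G" for F G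
    using rk_strict[OF that(1,2)] that(3) by fastforce
  have "inj_on rk C"
    by (rule inj_onI) (metis CP comparable rk_strict less_irrefl subset_iff_psubset_eq subsetD)
  have range: "rk ` C \<subseteq> {rk Fmax..rk Fmin}"
    using rk_le bounds CP assms(2,3) by (auto simp: subset_iff)
  have pred: "k - 1 \<in> rk ` C" if k: "k \<in> rk ` C" and gt: "rk Fmax < k" for k
  proof -
    obtain F where F: "F \<in> C" "rk F = k" using k by blast
    have "F \<subset> Fmax" using F gt bounds CP by auto
    then have "\<exists>F2\<in>{H \<in> C. F \<subset> H}. \<forall>H\<in>{H \<in> C. F \<subset> H}. H \<subseteq> F2 \<longrightarrow> F2 = H"
      using \<open>finite C\<close> \<open>Fmax \<in> C\<close> by (intro finite_has_minimal) auto
    then obtain F2 where F2: "F2 \<in> C" "F \<subset> F2" and F2_min: "\<And>H. H \<in> C \<Longrightarrow> F \<subset> H \<Longrightarrow> H \<subseteq> F2 \<Longrightarrow> H = F2"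
      by auto
    obtain G where G: "G \<in> P" "F \<subset> G" "G \<subseteq> F2" "rk G + 1 = rk F"
      using rk_step[of F F2] F F2 CP by blast
    have "G \<in> C"
    proof (rule extend[OF G(1)])
      fix H assume "H \<in> C"
      then have "H \<subseteq> F \<or> F2 \<subseteq> H" using comparable F F2_min by (metis F2(1) psubsetI)
      then show "H \<subseteq> G \<or> G \<subseteq> H" using G by blast
    qed
    then show ?thesis using F G(4) by force
  qed
  have "{rk Fmax..rk Fmin} \<subseteq> rk ` C"
    using atLeastAtMost_subset_if_pred_closed[OF _ pred] \<open>Fmin \<in> C\<close> by blast
  then have "rk ` C = {rk Fmax..rk Fmin}" using range by blast
  then have "card C = Suc (rk Fmin) - rk Fmax" using card_image[OF \<open>inj_on rk C\<close>] by simp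
  moreover have "rk Fmax \<le> rk Fmin" using range \<open>Fmin \<in> C\<close> by auto
  ultimately show ?thesis by simp
qed

lemma nc_bondI: "simple_graph n E \<Longrightarrow> F \<in> NC n E \<Longrightarrow> nc_bond n E F"
  unfolding nc_bond_def NC_def by simp

lemma NC_refine_step:
  assumes simple: "simple_graph n E" and tight: "tightly_closed n E"
    and "F \<in> NC n E" "F' \<in> NC n E" "F \<subset> F'"
  shows "\<exists>G\<in>NC n E. F \<subset> G \<and> G \<subseteq> F' \<and> card (comp_mins n G) + 1 = card (comp_mins n F)"
proof -
  interpret nc_bond n E F using nc_bondI[OF simple assms(3)] .
  have F': "nc_bond n E F'" using nc_bondI[OF simple assms(4)] .
  have F'_bond: "is_bond n E F'" using nc_bond.bond[OF F'] .
  obtain a b where ab: "(a, b) \<in> F'" "(a, b) \<notin> F" using assms(5) by auto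
  then have "(a, b) \<in> E" using NC_subset_edges[OF assms(4)] by auto
  then have "adj E a b" "\<not> a \<approx> b" using ab(2) bond_edge_iff[OF bond] unfolding adj_def by auto
  have F_F': "same_comp F' i j" if "i \<approx> j" for i j using same_comp_mono assms(5) that by blast
  define T where "T = {w. same_comp F' a w}"
  have "saturated T" unfolding T_def using saturated_coarser_comp[OF F'] assms(5) by blast
  moreover have "a \<in> T" "b \<in> T" using same_comp_edge[OF ab(1)] unfolding T_def by auto
  ultimately obtain G where G: "G \<in> NC n E" "F \<subset> G" "card (comp_mins n G) + 1 = card (comp_mins n F)"
    and G_T: "\<And>i j. same_comp G i j \<Longrightarrow> i \<approx> j \<or> i \<in> T \<and> j \<in> T"
    using merge_within_saturated[OF tight \<open>saturated T\<close> \<open>adj E a b\<close> \<open>a \<in> T\<close> \<open>b \<in> T\<close> \<open>\<not> a \<approx> b\<close>]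
    by blast
  have "(i, j) \<in> F'" if "(i, j) \<in> G" for i j
  proof -
    have "i \<approx> j \<or> i \<in> T \<and> j \<in> T" using G_T[OF same_comp_edge[OF that]] .
    then have "same_comp F' i j"
      unfolding T_def using F_F' same_comp_sym same_comp_trans by blast
    moreover have "(i, j) \<in> E" using that NC_subset_edges[OF G(1)] by blast
    ultimately show ?thesis using bond_edge_iff[OF F'_bond] by blast
  qed
  then have "G \<subseteq> F'" by auto
  then show ?thesis using G by blast
qed

lemma NC_extend_step:
  assumes simple: "simple_graph n E" and tight: "tightly_closed n E" and "F \<in> NC n E" "F \<noteq> E"
  shows "\<exists>G\<in>NC n E. card (comp_mins n G) + 1 = card (comp_mins n F)"
proof -
  interpret nc_bond n E F using nc_bondI[OF simple assms(3)] .
  obtain a b where "(a, b) \<in> E" "(a, b) \<notin> F" using assms(4) F_subset_E by auto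
  then have ab: "adj E a b" "\<not> a \<approx> b" using bond_edge_iff[OF bond] unfolding adj_def by auto
  have "saturated UNIV" unfolding saturated_def by simp
  then show ?thesis using merge_within_saturated[OF tight _ ab(1) UNIV_I UNIV_I ab(2)] by blast
qed

lemma edges_in_NC:
  assumes "simple_graph n E" "tightly_closed n E"
  shows "E \<in> NC n E"
proof -
  obtain F where F: "F \<in> NC n E"
    and F_min: "\<forall>G. G \<in> NC n E \<longrightarrow> card (comp_mins n F) \<le> card (comp_mins n G)"
    using ex_has_least_nat[where P = "\<lambda>F. F \<in> NC n E" and m = "\<lambda>F. card (comp_mins n F)",
        OF empty_in_NC[OF assms(1)]] by blast
  have "F = E"
  proof (rule ccontr)
    assume "F \<noteq> E"
    then obtain G where "G \<in> NC n E" "card (comp_mins n G) + 1 = card (comp_mins n F)"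
      using NC_extend_step[OF assms F] by blast
    then show False using F_min by force
  qed
  then show ?thesis using F by simp
qed

theorem theorem5p15:
  fixes n :: nat and E :: "(nat \<times> nat) set"
  assumes "simple_graph n E"
    and "tightly_closed n E"
  shows "graded (NC n E)"
proof -
  have "card C = card (comp_mins n {}) - card (comp_mins n E) + 1" if "is_maximal_chain (NC n E) C" for C
  proof (rule maximal_chain_card[OF finite_NC[OF assms(1)] empty_in_NC[OF assms(1)] edges_in_NC[OF assms] _ _ _ that])
    show "{} \<subseteq> F \<and> F \<subseteq> E" if "F \<in> NC n E" for F
      using NC_subset_edges[OF that] by simp
    show "card (comp_mins n G) < card (comp_mins n F)" if "F \<in> NC n E" "G \<in> NC n E" "F \<subset> G" for F G
      using nc_bond.card_comp_mins_psubset[OF nc_bondI[OF assms(1) that(1)] that(3) NC_subset_edges[OF that(2)]] .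
  qed (use NC_refine_step[OF assms] in blast)
  then show ?thesis unfolding graded_def by simp
qed

end
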